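(* Let $u$ be a one-sided Sturmian sequence with left special sequence $l=l_1l_2\dots$, and let $xl_1l_2\dots l_{n-1}$ ($x\in\{0,1\}$) be a significant block of $\tilde X_u$. In the HB diagram of $X_u^+$, two arrows leave $xl_1l_2\dots l_{n-1}$ if and only if $xl_1l_2\dots l_{n-1}$ is a right special block, equivalently if and only if $xl_1l_2\dots l_{n-1}=l_nl_{n-1}\dots l_2l_1$.
   Context: A sequence $u\in\{0,1\}^{\mathbb N}$ is Sturmian if for every $n\ge1$ exactly $n+1$ distinct blocks of length $n$ occur in $u$. $X_u^+$ is the closure of $\{\sigma^n u:n\in\mathbb N\}$, $\sigma$ the shift $(\sigma x)_i=x_{i+1}$, and $\tilde X_u=\{x\in\{0,1\}^{\mathbb Z}: x_px_{p+1}\dots\in X_u^+\ \forall p\}$; the languages of $u$, $X_u^+$, $\tilde X_u$ coincide. For each $n$ there is a unique block $L_n$ of length $n$ with $0L_n$ and $1L_n$ in the language; these are the prefixes $L_n=l_1\dots l_n$ of the left special sequence $l$. A block $v$ is right special if both $v0$ and $v1$ are in the language. For a block $a_{-n}\dots a_0$ in the language, $\mathrm{fol}(a_{-n}\dots a_0)=\{b_0b_1\dots\in X_u^+:\exists b\in\tilde X_u,\ b_{-n}\dots b_0=a_{-n}\dots a_0\}$. A block $a_{-n}\dots a_0$ ($n\ge1$) is significant if $\mathrm{fol}(a_{-n}\dots a_0)\subsetneq\mathrm{fol}(a_{-n+1}\dots a_0)$; $0$ and $1$ are also significant. $\mathrm{sig}(\cdot)$ is the longest significant suffix. The HB diagram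 has vertex set the significant blocks and an arrow $\alpha\to\beta$ iff there is a symbol $b$ with $\alpha b$ in the language and $\beta=\mathrm{sig}(\alpha b)$. *)

theory Defs
  imports "HOL-Analysis.Analysis" "HOL-Library.Sublist"
begin

text \<open>Symbols are the natural numbers 0 and 1; one-sided sequences are nat => nat,
  two-sided sequences are int => nat, blocks are lists (written left to right).\<close>

definition lang :: "(nat \<Rightarrow> nat) \<Rightarrow> nat list set" where
  "lang u = {w. \<exists>i. w = map u [i..<i + length w]}"

definition sturmian :: "(nat \<Rightarrow> nat) \<Rightarrow> bool" where
  "sturmian u \<longleftrightarrow> range u \<subseteq> {0,1} \<and>
     (\<forall>n\<ge>1. card {w \<in> lang u. length w = n} = n + 1)"

definition shift :: "(nat \<Rightarrow> nat) \<Rightarrow> (nat \<Rightarrow> nat)" where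
  "shift x = (\<lambda>i. x (Suc i))"

text \<open>X_u^+ : closure (product topology on nat => nat, nat discrete) of the orbit of u.\<close>
definition Xplus :: "(nat \<Rightarrow> nat) \<Rightarrow> (nat \<Rightarrow> nat) set" where
  "Xplus u = closure {(shift ^^ n) u | n. True}"

definition Xtilde :: "(nat \<Rightarrow> nat) \<Rightarrow> (int \<Rightarrow> nat) set" where
  "Xtilde u = {x. \<forall>p::int. (\<lambda>i::nat. x (p + int i)) \<in> Xplus u}"

definition left_special_seq :: "(nat \<Rightarrow> nat) \<Rightarrow> (nat \<Rightarrow> nat) \<Rightarrow> bool" where
  "left_special_seq u l \<longleftrightarrow>
     (\<forall>n. 0 # map l [1..<n+1] \<in> lang u \<and> 1 # map l [1..<n+1] \<in> lang u)"

definition right_special :: "(nat \<Rightarrow> nat) \<Rightarrow> nat list \<Rightarrow> bool" where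
  "right_special u v \<longleftrightarrow> v @ [0] \<in> lang u \<and> v @ [1] \<in> lang u"

text \<open>fol(a_{-n} ... a_0) for a block w = [a_{-n},...,a_0] (length n+1).\<close>
definition fol :: "(nat \<Rightarrow> nat) \<Rightarrow> nat list \<Rightarrow> (nat \<Rightarrow> nat) set" where
  "fol u w = {c \<in> Xplus u. \<exists>b \<in> Xtilde u.
       (\<forall>j<length w. b (int j - int (length w - 1)) = w ! j) \<and>
       c = (\<lambda>i. b (int i))}"

definition significant :: "(nat \<Rightarrow> nat) \<Rightarrow> nat list \<Rightarrow> bool" where
  "significant u w \<longleftrightarrow> w \<in> lang u \<and>
     (w = [0] \<or> w = [1] \<or> (length w \<ge> 2 \<and> fol u w \<subset> fol u (tl w)))"

definition sig :: "(nat \<Rightarrow> nat) \<Rightarrow> nat list \<Rightarrow> nat list" where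
  "sig u w = (THE s. suffix s w \<and> significant u s \<and>
                 (\<forall>s'. suffix s' w \<and> significant u s' \<longrightarrow> length s' \<le> length s))"

definition HB_arrow :: "(nat \<Rightarrow> nat) \<Rightarrow> nat list \<Rightarrow> nat list \<Rightarrow> bool" where
  "HB_arrow u \<alpha> \<beta> \<longleftrightarrow> significant u \<alpha> \<and> significant u \<beta> \<and>
     (\<exists>b. \<alpha> @ [b] \<in> lang u \<and> \<beta> = sig u (\<alpha> @ [b]))"

end

theory Submission
  imports Defs
begin

text \<open>Two arrows leave \<alpha> exactly when both one-letter extensions of \<alpha> lie in the
  language, since the arrow for the letter b ends in a suffix of \<alpha> b that still ends with b.
  The second equivalence rests on the fact that the language of a Sturmian sequence is closed
  under reversal: then the reverse of the left special factor L_n is right special, and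
  Sturmian complexity n + 1 leaves room for only one right special factor of each length.

  Closure under reversal is proved by induction on the length. The only critical factors are
  a w b with w bispecial; w is then a palindrome, and one must show c w c' is a factor when
  c \<noteq> c'. Otherwise, since the Rauzy graph of order |w| consists of two cycles through w
  and reversal maps the cycle leaving w along c onto itself, an occurrence of c w would force
  the sequence to stay on that cycle forever, making it eventually periodic.\<close>

section \<open>Factors and factor complexity\<close>

lemma mem_lang_iff_nth: "w \<in> lang u \<longleftrightarrow> (\<exists>i. \<forall>k<length w. w ! k = u (i + k))"
proof
  assume "w \<in> lang u"
  then obtain i where "w = map u [i..<i + length w]" by (auto simp: lang_def)
  then show "\<exists>i. \<forall>k<length w. w ! k = u (i + k)"
    by (metis add_diff_cancel_left' nth_map_upt)
next
  assume "\<exists>i. \<forall>k<length w. w ! k = u (i + k)"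
  then obtain i where "\<forall>k<length w. w ! k = u (i + k)" by blast
  then have "w = map u [i..<i + length w]"
    by (intro nth_equalityI) (auto simp: nth_map_upt)
  then show "w \<in> lang u" by (auto simp: lang_def)
qed

lemma map_upt_mem_lang: "map u [i..<i + n] \<in> lang u"
  by (auto simp: lang_def)

lemma map_upt_shift: "map (\<lambda>s. u (j + s)) [i..<k] = map u [j + i..<j + k]"
  by (rule nth_equalityI) (simp_all add: add.assoc)

lemma Cons_snoc_mem_lang_if_occurs:
  assumes "map u [Suc j..<Suc j + length w] = w"
  shows "u j # w @ [u (Suc j + length w)] \<in> lang u"
proof -
  have "[j..<j + Suc (Suc (length w))] = j # [Suc j..<Suc (Suc j + length w)]"
    by (simp add: upt_conv_Cons del: upt_Suc)
  also have "[Suc j..<Suc (Suc j + length w)] = [Suc j..<Suc j + length w] @ [Suc j + length w]"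
    by (rule upt_Suc_append) simp
  finally have "[j..<j + Suc (Suc (length w))]
      = j # [Suc j..<Suc j + length w] @ [Suc j + length w]" .
  then have "map u [j..<j + Suc (Suc (length w))] = u j # w @ [u (Suc j + length w)]"
    by (simp only: list.map map_append assms)
  then show ?thesis using map_upt_mem_lang[of u j "Suc (Suc (length w))"] by (simp only:)
qed

lemma append_mem_langD1: "xs @ ys \<in> lang u \<Longrightarrow> xs \<in> lang u"
  unfolding mem_lang_iff_nth by (metis length_append nth_append trans_less_add1)

lemma append_mem_langD2: "xs @ ys \<in> lang u \<Longrightarrow> ys \<in> lang u"
  unfolding mem_lang_iff_nth
  by (metis add.assoc length_append nat_add_left_cancel_less nth_append_length_plus)

lemma take_mem_lang: "w \<in> lang u \<Longrightarrow> take n w \<in> lang u"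
  by (metis append_take_drop_id append_mem_langD1)

lemma Nil_mem_lang: "[] \<in> lang u"
  unfolding mem_lang_iff_nth by simp

lemma tl_mem_lang: "w \<in> lang u \<Longrightarrow> tl w \<in> lang u"
  using append_mem_langD2[of "[hd w]" "tl w" u] by (cases w) (simp_all add: Nil_mem_lang)

lemma mem_lang_snoc_ex: "w \<in> lang u \<Longrightarrow> \<exists>b. w @ [b] \<in> lang u"
  unfolding mem_lang_iff_nth
  by (metis length_append_singleton less_Suc_eq nth_append nth_append_length)

lemma set_subset_range_if_mem_lang: "w \<in> lang u \<Longrightarrow> set w \<subseteq> range u"
  unfolding mem_lang_iff_nth by (auto simp: in_set_conv_nth)

definition factors :: "(nat \<Rightarrow> nat) \<Rightarrow> nat \<Rightarrow> nat list set" where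
  "factors u n = {w \<in> lang u. length w = n}"

lemma finite_factors: "finite (range u) \<Longrightarrow> finite (factors u n)"
proof -
  assume "finite (range u)"
  then have "finite {w. set w \<subseteq> range u \<and> length w = n}"
    by (rule finite_lists_length_eq)
  then show ?thesis
    by (rule rev_finite_subset) (auto simp: factors_def dest: set_subset_range_if_mem_lang)
qed

lemma factors_0: "factors u 0 = {[]}"
  by (auto simp: factors_def Nil_mem_lang)

lemma butlast_factors_Suc: "butlast ` factors u (Suc n) = factors u n"
proof
  show "butlast ` factors u (Suc n) \<subseteq> factors u n"
    by (auto simp: factors_def butlast_conv_take take_mem_lang)
  show "factors u n \<subseteq> butlast ` factors u (Suc n)"
  proof
    fix w assume "w \<in> factors u n"
    then obtain b where "w @ [b] \<in> lang u" "length w = n"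
      using mem_lang_snoc_ex by (auto simp: factors_def)
    then show "w \<in> butlast ` factors u (Suc n)"
      by (auto simp: factors_def intro!: image_eqI[of _ _ "w @ [b]"])
  qed
qed

definition eventually_periodic :: "(nat \<Rightarrow> 'a) \<Rightarrow> bool" where
  "eventually_periodic u \<longleftrightarrow> (\<exists>M p. 0 < p \<and> (\<forall>i\<ge>M. u (i + p) = u i))"

lemma eventually_periodic_mod:
  fixes u :: "nat \<Rightarrow> 'a" and t :: nat
  assumes "0 < p" and "\<forall>i\<ge>M. u (i + p) = u i"
  shows "u (M + t) = u (M + t mod p)"
proof (induction t rule: less_induct)
  case (less t)
  show ?case
  proof (cases "t < p")
    case False
    then have "u (M + t) = u (M + (t - p))"
      using assms(2)[rule_format, of "M + (t - p)"] by simp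
    also have "\<dots> = u (M + t mod p)"
      using less[of "t - p"] False assms(1) by (simp add: le_mod_geq)
    finally show ?thesis .
  qed simp
qed

lemma card_factors_le_if_eventually_periodic:
  assumes "0 < p" and "\<forall>i\<ge>M. u (i + p) = u i"
  shows "card (factors u n) \<le> M + p"
proof -
  have "factors u n \<subseteq> (\<lambda>i. map u [i..<i + n]) ` {..<M + p}"
  proof
    fix w assume "w \<in> factors u n"
    then obtain i where w: "w = map u [i..<i + n]" by (auto simp: factors_def lang_def)
    show "w \<in> (\<lambda>i. map u [i..<i + n]) ` {..<M + p}"
    proof (cases "i < M + p")
      case False
      define i' where "i' = M + (i - M) mod p"
      have "u (i + k) = u (i' + k)" for k
      proof -
        have "u (i + k) = u (M + (i - M + k) mod p)"
          using eventually_periodic_mod[OF assms, of "i - M + k"] False by simp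
        also have "\<dots> = u (i' + k)"
          using eventually_periodic_mod[OF assms, of "(i - M) mod p + k"]
          by (simp add: i'_def mod_add_left_eq add.assoc)
        finally show ?thesis .
      qed
      then have "w = map u [i'..<i' + n]"
        by (auto simp: w intro!: nth_equalityI)
      moreover have "i' < M + p" using assms(1) by (simp add: i'_def)
      ultimately show ?thesis by blast
    qed (use w in blast)
  qed
  then have "card (factors u n) \<le> card ((\<lambda>i. map u [i..<i + n]) ` {..<M + p})"
    by (intro card_mono) simp_all
  also have "\<dots> \<le> M + p"
    using card_image_le[of "{..<M + p}"] by simp
  finally show ?thesis .
qed

lemma next_letter_eq_if_card_factors_Suc_le:
  assumes fin: "finite (range u)" and card: "card (factors u (Suc k)) \<le> card (factors u k)"
    and "map u [i..<i + k] = map u [j..<j + k]"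
  shows "u (i + k) = u (j + k)"
proof -
  have fin_Suc: "finite (factors u (Suc k))" using finite_factors[OF fin] .
  have "card (butlast ` factors u (Suc k)) = card (factors u (Suc k))"
    using card card_image_le[OF fin_Suc, of butlast] butlast_factors_Suc[of u k] by simp
  then have inj: "inj_on butlast (factors u (Suc k))"
    using eq_card_imp_inj_on[OF fin_Suc] by blast
  have "map u [i..<i + Suc k] \<in> factors u (Suc k)" "map u [j..<j + Suc k] \<in> factors u (Suc k)"
    using map_upt_mem_lang[of u i "Suc k"] map_upt_mem_lang[of u j "Suc k"]
    by (simp_all add: factors_def)
  moreover have "butlast (map u [i..<i + Suc k]) = butlast (map u [j..<j + Suc k])"
    using assms(3) by (simp add: map_butlast[symmetric])
  ultimately have "map u [i..<i + Suc k] = map u [j..<j + Suc k]"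
    using inj by (meson inj_onD)
  then show ?thesis by simp
qed

text \<open>Morse--Hedlund: the letter after an occurrence of a factor of length k is determined by
  that factor, so by pigeonhole two occurrences of one such factor propagate into a period.\<close>
lemma eventually_periodic_if_card_factors_Suc_le:
  assumes fin: "finite (range u)" and card: "card (factors u (Suc k)) \<le> card (factors u k)"
  shows "eventually_periodic u"
proof -
  define f where "f i = map u [i..<i + k]" for i
  have "f ` {..card (factors u k)} \<subseteq> factors u k"
    by (auto simp: f_def factors_def map_upt_mem_lang)
  then have "\<not> inj_on f {..card (factors u k)}"
    using card_inj_on_le[OF _ _ finite_factors[OF fin]] by fastforce
  then obtain i j where ij: "i < j" "f i = f j"
    unfolding inj_on_def by (metis linorder_neqE_nat)
  have same: "u (i + n) = u (j + n)" for n
  proof (induction n rule: less_induct)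
    case (less n)
    show ?case
    proof (cases "n < k")
      case True
      then show ?thesis using arg_cong[OF ij(2), of "\<lambda>xs. xs ! n"] by (simp add: f_def)
    next
      case False
      have "map u [i + (n - k)..<i + (n - k) + k] = map u [j + (n - k)..<j + (n - k) + k]"
      proof (rule nth_equalityI)
        fix s assume "s < length (map u [i + (n - k)..<i + (n - k) + k])"
        then show "map u [i + (n - k)..<i + (n - k) + k] ! s
            = map u [j + (n - k)..<j + (n - k) + k] ! s"
          using less[of "n - k + s"] False by (simp add: add.assoc)
      qed simp
      then show ?thesis
        using next_letter_eq_if_card_factors_Suc_le[OF fin card] False by fastforce
    qed
  qed
  have "\<forall>s\<ge>i. u (s + (j - i)) = u s"
  proof (intro allI impI)
    fix s assume "i \<le> s"
    then have "s + (j - i) = j + (s - i)" "s = i + (s - i)" using ij(1) by simp_all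
    then show "u (s + (j - i)) = u s" using same[of "s - i"] by metis
  qed
  then show ?thesis using ij(1) unfolding eventually_periodic_def by (metis zero_less_diff)
qed

lemma card_factors_ge_if_not_eventually_periodic:
  assumes "finite (range u)" and "\<not> eventually_periodic u"
  shows "n + 1 \<le> card (factors u n)"
proof (induction n)
  case 0
  then show ?case by (simp add: factors_0)
next
  case (Suc n)
  have "card (factors u n) < card (factors u (Suc n))"
    using eventually_periodic_if_card_factors_Suc_le[OF assms(1), of n] assms(2) by linarith
  then show ?case using Suc by linarith
qed

lemma mod_diff_1_eq:
  fixes x p :: nat
  assumes "x mod p = 0" and "0 < x" and "0 < p"
  shows "(x - 1) mod p = p - 1"
proof -
  obtain q where "x = p * Suc q"
    using assms by (metis dvd_def mod_eq_0_iff_dvd mult_0_right neq0_conv not0_implies_Suc)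
  then have "x - 1 = (p - 1) + p * q" using assms(3) by (simp add: algebra_simps)
  then have "(x - 1) mod p = (p - 1) mod p" by (simp only: mod_mult_self2)
  then show ?thesis using assms(3) by simp
qed

lemma card_image_add_two_le:
  assumes "finite B" and "{y1, z1, y2, z2} \<subseteq> B" and "y1 \<noteq> z1" and "y2 \<noteq> z2"
    and "f y1 = f z1" and "f y2 = f z2" and "f y1 \<noteq> f y2"
  shows "card (f ` B) + 2 \<le> card B"
proof -
  have "y1 \<noteq> y2" using assms(7) by blast
  then have y: "{y1, y2} \<subseteq> B" "card {y1, y2} = 2"
    using assms(2) by auto
  have "f ` B \<subseteq> f ` (B - {y1, y2})"
  proof
    fix v assume "v \<in> f ` B"
    then obtain x where x: "x \<in> B" "v = f x" by blast
    have "z1 \<in> B - {y1, y2}" "z2 \<in> B - {y1, y2}"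
      using assms(2-7) by auto
    then show "v \<in> f ` (B - {y1, y2})"
      using x assms(5,6) by (metis Diff_iff empty_iff image_eqI insert_iff)
  qed
  then have "card (f ` B) \<le> card (B - {y1, y2})"
    using assms(1) by (meson card_image_le card_mono finite_Diff finite_imageI order_trans)
  also have "\<dots> = card B - 2"
    using card_Diff_subset[OF _ y(1)] y(2) by simp
  finally show ?thesis
    using card_mono[OF assms(1) y(1)] y(2) by linarith
qed

section \<open>Sturmian sequences\<close>

definition left_special :: "(nat \<Rightarrow> nat) \<Rightarrow> nat list \<Rightarrow> bool" where
  "left_special u v \<longleftrightarrow> 0 # v \<in> lang u \<and> 1 # v \<in> lang u"

locale sturmian_sequence =
  fixes u :: "nat \<Rightarrow> nat"
  assumes sturmian: "sturmian u"
begin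

lemma range_subset: "range u \<subseteq> {0, 1}"
  using sturmian by (simp add: sturmian_def)

lemma letter_cases:
  assumes "w \<in> lang u" and "b \<in> set w"
  shows "b = 0 \<or> b = 1"
proof -
  have "b \<in> range u" using set_subset_range_if_mem_lang[OF assms(1)] assms(2) by blast
  then show ?thesis using range_subset by auto
qed

lemma finite_range: "finite (range u)"
  using range_subset by (rule finite_subset) simp

lemma finite_factors_u: "finite (factors u n)"
  using finite_range by (rule finite_factors)

lemma card_factors: "card (factors u n) = n + 1"
proof (cases "n = 0")
  case True
  then show ?thesis by (simp add: factors_0)
next
  case False
  then show ?thesis using sturmian by (simp add: sturmian_def factors_def)
qed

lemma not_eventually_periodic: "\<not> eventually_periodic u"
proof
  assume "eventually_periodic u"
  then obtain M p where "0 < p" "\<forall>i\<ge>M. u (i + p) = u i"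
    by (auto simp: eventually_periodic_def)
  then have "card (factors u (M + p)) \<le> M + p"
    by (rule card_factors_le_if_eventually_periodic)
  then show False by (simp add: card_factors)
qed

lemma factors_suffix_eq: "factors (\<lambda>i. u (N + i)) n = factors u n"
proof -
  define u' where "u' i = u (N + i)" for i
  have "\<not> eventually_periodic u'"
  proof
    assume "eventually_periodic u'"
    then obtain M p where "0 < p" "\<forall>i\<ge>M. u' (i + p) = u' i"
      by (auto simp: eventually_periodic_def)
    have "\<forall>i\<ge>N + M. u (i + p) = u i"
    proof (intro allI impI)
      fix i assume "N + M \<le> i"
      then show "u (i + p) = u i"
        using \<open>\<forall>i\<ge>M. u' (i + p) = u' i\<close>[rule_format, of "i - N"] by (simp add: u'_def)
    qed
    then have "eventually_periodic u"
      using \<open>0 < p\<close> unfolding eventually_periodic_def by blast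
    then show False using not_eventually_periodic by contradiction
  qed
  moreover have "finite (range u')"
    using finite_range by (rule finite_subset[rotated]) (auto simp: u'_def)
  ultimately have card_ge: "n + 1 \<le> card (factors u' n)"
    using card_factors_ge_if_not_eventually_periodic by blast
  have "factors u' n \<subseteq> factors u n"
  proof
    fix w assume "w \<in> factors u' n"
    then obtain i where "\<forall>k<length w. w ! k = u (N + i + k)" "length w = n"
      by (auto simp: factors_def mem_lang_iff_nth u'_def add.assoc)
    then show "w \<in> factors u n" by (auto simp: factors_def mem_lang_iff_nth)
  qed
  then have "factors u' n = factors u n"
    using card_ge by (intro card_seteq[OF finite_factors_u]) (simp_all add: card_factors)
  moreover have "u' = (\<lambda>i. u (N + i))" by (simp add: u'_def fun_eq_iff)
  ultimately show ?thesis by simp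
qed

lemma occurs_beyond:
  assumes "v \<in> lang u"
  shows "\<exists>j\<ge>N. \<forall>k<length v. v ! k = u (j + k)"
proof -
  obtain j0 where j0: "\<forall>k<length v. v ! k = u (j0 + k)"
    using assms by (auto simp: mem_lang_iff_nth)
  have "map u [0..<j0 + length v] \<in> factors (\<lambda>i. u (N + i)) (j0 + length v)"
    using map_upt_mem_lang[of u 0] by (simp add: factors_suffix_eq factors_def)
  then obtain i where "\<forall>k<j0 + length v. u k = u (N + i + k)"
    by (auto simp: factors_def mem_lang_iff_nth add.assoc)
  then have "\<forall>k<length v. v ! k = u (N + i + j0 + k)"
    using j0 by (simp add: add.assoc)
  then show ?thesis by (intro exI[of _ "N + i + j0"]) simp
qed

lemma left_extension: "v \<in> lang u \<Longrightarrow> \<exists>a. a # v \<in> lang u"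
proof -
  assume "v \<in> lang u"
  then obtain j where "j \<ge> 1" "\<forall>k<length v. v ! k = u (j + k)"
    using occurs_beyond by blast
  then have "\<forall>k<length (u (j - 1) # v). (u (j - 1) # v) ! k = u (j - 1 + k)"
    by (auto simp: nth_Cons split: nat.split)
  then show ?thesis unfolding mem_lang_iff_nth by blast
qed

lemma tl_factors_Suc: "tl ` factors u (Suc n) = factors u n"
proof
  show "tl ` factors u (Suc n) \<subseteq> factors u n"
    by (auto simp: factors_def tl_mem_lang)
  show "factors u n \<subseteq> tl ` factors u (Suc n)"
  proof
    fix w assume "w \<in> factors u n"
    then obtain a where "a # w \<in> lang u" "length w = n"
      using left_extension by (auto simp: factors_def)
    then show "w \<in> tl ` factors u (Suc n)"
      by (auto simp: factors_def intro!: image_eqI[of _ _ "a # w"])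
  qed
qed

lemma right_special_unique:
  assumes "right_special u v" and "right_special u v'" and "length v = length v'"
  shows "v = v'"
proof (rule ccontr)
  assume "v \<noteq> v'"
  then have "card (butlast ` factors u (Suc (length v))) + 2 \<le> card (factors u (Suc (length v)))"
    using assms by (intro card_image_add_two_le[OF finite_factors_u, of "v @ [0]" "v @ [1]"
        "v' @ [0]" "v' @ [1]"]) (auto simp: right_special_def factors_def)
  then show False by (simp add: butlast_factors_Suc card_factors)
qed

lemma left_special_unique:
  assumes "left_special u v" and "left_special u v'" and "length v = length v'"
  shows "v = v'"
proof (rule ccontr)
  assume "v \<noteq> v'"
  then have "card (tl ` factors u (Suc (length v))) + 2 \<le> card (factors u (Suc (length v)))"
    using assms by (intro card_image_add_two_le[OF finite_factors_u, of "0 # v" "1 # v"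
        "0 # v'" "1 # v'"]) (auto simp: left_special_def factors_def)
  then show False by (simp add: tl_factors_Suc card_factors)
qed

lemma right_special_if_snoc_mem_lang:
  "v @ [a] \<in> lang u \<Longrightarrow> v @ [b] \<in> lang u \<Longrightarrow> a \<noteq> b \<Longrightarrow> right_special u v"
  using letter_cases[of "v @ [a]" a] letter_cases[of "v @ [b]" b]
  by (auto simp: right_special_def)

lemma left_special_if_Cons_mem_lang:
  "a # v \<in> lang u \<Longrightarrow> b # v \<in> lang u \<Longrightarrow> a \<noteq> b \<Longrightarrow> left_special u v"
  using letter_cases[of "a # v" a] letter_cases[of "b # v" b]
  by (auto simp: left_special_def)

text \<open>A factor that is not bispecial has a unique extension on one side, which forces
  every left and every right extension to combine.\<close>
lemma Cons_snoc_mem_lang_if_not_bispecial: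
  assumes a: "a # v \<in> lang u" and b: "v @ [b] \<in> lang u"
    and not_bispecial: "\<not> (right_special u v \<and> left_special u v)"
  shows "a # v @ [b] \<in> lang u"
proof (cases "right_special u v")
  case False
  obtain c where c: "(a # v) @ [c] \<in> lang u" using mem_lang_snoc_ex[OF a] by blast
  then have "v @ [c] \<in> lang u" using append_mem_langD2[of "[a]"] by simp
  then have "c = b" using right_special_if_snoc_mem_lang[OF b] False by metis
  then show ?thesis using c by simp
next
  case True
  obtain c where c: "c # v @ [b] \<in> lang u" using left_extension[OF b] by blast
  then have "c # v \<in> lang u" using append_mem_langD1[of "c # v"] by simp
  then have "c = a" using left_special_if_Cons_mem_lang[OF a] True not_bispecial by metis
  then show ?thesis using c by simp
qed

end

section \<open>Walks in the Rauzy graph\<close>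

text \<open>A walk in the Rauzy graph of order m, recorded as the word it spells: every window of
  length m + 1 is a factor.\<close>
definition rauzy_walk :: "(nat \<Rightarrow> nat) \<Rightarrow> nat \<Rightarrow> nat list \<Rightarrow> bool" where
  "rauzy_walk u m X \<longleftrightarrow> (\<forall>i. i + Suc m \<le> length X \<longrightarrow> take (Suc m) (drop i X) \<in> lang u)"

definition return_walk :: "(nat \<Rightarrow> nat) \<Rightarrow> nat list \<Rightarrow> nat \<Rightarrow> nat list \<Rightarrow> bool" where
  "return_walk u w c P \<longleftrightarrow> rauzy_walk u (length w) P \<and> take (Suc (length w)) P = w @ [c]
     \<and> drop (length P - length w) P = w
     \<and> (\<forall>i. 0 < i \<and> i + length w < length P \<longrightarrow> take (length w) (drop i P) \<noteq> w)"

lemma rauzy_walk_take: "rauzy_walk u m X \<Longrightarrow> rauzy_walk u m (take n X)"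
  unfolding rauzy_walk_def by (simp add: take_drop min_def)

lemma rauzy_walk_window_mem_lang:
  assumes "rauzy_walk u m X" and "i + m < length X"
  shows "take m (drop i X) \<in> lang u"
proof -
  have "take (Suc m) (drop i X) \<in> lang u"
    using assms by (simp add: rauzy_walk_def)
  from take_mem_lang[OF this, of m] show ?thesis by (simp add: min_def)
qed

lemma take_drop_rev:
  assumes "i + n \<le> length xs"
  shows "take n (drop i (rev xs)) = rev (take n (drop (length xs - n - i) xs))"
proof (rule nth_equalityI)
  fix k assume "k < length (take n (drop i (rev xs)))"
  then have "k < n" using assms by simp
  then show "take n (drop i (rev xs)) ! k = rev (take n (drop (length xs - n - i) xs)) ! k"
    using assms by (simp add: rev_nth min_def)
qed (use assms in simp)

lemma rauzy_walk_rev: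
  assumes rev_closed: "\<forall>z\<in>lang u. length z = Suc m \<longrightarrow> rev z \<in> lang u"
    and "rauzy_walk u m X"
  shows "rauzy_walk u m (rev X)"
  unfolding rauzy_walk_def
proof (intro allI impI)
  fix i assume i: "i + Suc m \<le> length (rev X)"
  then have "take (Suc m) (drop (length X - Suc m - i) X) \<in> lang u"
    using assms(2) by (simp add: rauzy_walk_def)
  then show "take (Suc m) (drop i (rev X)) \<in> lang u"
    using rev_closed i by (simp add: take_drop_rev)
qed

context
  fixes u w c P
  assumes walk: "return_walk u w c P"
begin

lemma return_walk_length: "length w < length P"
proof -
  have "length (take (Suc (length w)) P) = Suc (length w)"
    using walk by (simp add: return_walk_def)
  then show ?thesis by simp
qed

lemma return_walk_take: "take (length w) P = w"
proof -
  have "take (length w) (take (Suc (length w)) P) = w"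
    using walk by (simp add: return_walk_def)
  then show ?thesis by (simp add: min_def)
qed

lemma return_walk_nth: "P ! length w = c"
proof -
  have "take (Suc (length w)) P ! length w = c"
    using walk by (simp add: return_walk_def)
  then show ?thesis by simp
qed

lemma return_walk_nth_mod:
  assumes "t < length P"
  shows "P ! t = P ! (t mod (length P - length w))"
  using assms
proof (induction t rule: less_induct)
  case (less t)
  define p where "p = length P - length w"
  show ?case
  proof (cases "t < p")
    case False
    have "t - p < length w" using False less.prems by (simp add: p_def)
    have "P ! t = drop (length P - length w) P ! (t - p)"
      using False less.prems by (simp add: p_def)
    also have "\<dots> = take (length w) P ! (t - p)"
      using walk return_walk_take by (simp add: return_walk_def)
    also have "\<dots> = P ! (t - p)"
      using \<open>t - p < length w\<close> by simp
    also have "\<dots> = P ! ((t - p) mod p)"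
      using less False return_walk_length by (simp add: p_def)
    finally show ?thesis using False by (simp add: p_def le_mod_geq)
  qed (simp add: p_def)
qed

lemma return_walk_prefix:
  assumes "j < length P - length w"
  defines "X \<equiv> take (j + length w) P"
  shows "rauzy_walk u (length w) X" and "take (length w) X = w" and "length w \<le> length X"
    and "\<forall>i. 0 < i \<and> i + length w \<le> length X \<longrightarrow> take (length w) (drop i X) \<noteq> w"
    and "drop (length X - length w) X = take (length w) (drop j P)"
proof -
  have len: "length X = j + length w" using assms by (simp add: X_def)
  show "rauzy_walk u (length w) X"
    using walk by (simp add: X_def return_walk_def rauzy_walk_take)
  show "take (length w) X = w" "length w \<le> length X"
    using return_walk_take len by (simp_all add: X_def)
  show "drop (length X - length w) X = take (length w) (drop j P)"
    using len by (simp add: X_def drop_take)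
  show "\<forall>i. 0 < i \<and> i + length w \<le> length X \<longrightarrow> take (length w) (drop i X) \<noteq> w"
  proof (intro allI impI)
    fix i assume i: "0 < i \<and> i + length w \<le> length X"
    then have "i \<le> j" using len by simp
    then have "i + length w < length P" "take (length w) (drop i X) = take (length w) (drop i P)"
      using assms(1) by (simp_all add: X_def drop_take min_def)
    then show "take (length w) (drop i X) \<noteq> w"
      using walk i by (simp add: return_walk_def)
  qed
qed

lemma return_walk_rev:
  assumes rev_closed: "\<forall>z\<in>lang u. length z = Suc (length w) \<longrightarrow> rev z \<in> lang u"
    and palindrome: "rev w = w"
  shows "return_walk u w (P ! (length P - length w - 1)) (rev P)"
  unfolding return_walk_def
proof (intro conjI allI impI)
  define m n where "m = length w" and "n = length P"
  have P: "rauzy_walk u m P" "take m P = w" "drop (n - m) P = w" "m < n"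
    using walk return_walk_take return_walk_length by (auto simp: return_walk_def m_def n_def)
  show "rauzy_walk u (length w) (rev P)"
    using rauzy_walk_rev[OF rev_closed] P(1) by (simp add: m_def)
  have "drop (n - Suc m) P = P ! (n - m - 1) # w"
    using P(3,4) Cons_nth_drop_Suc[of "n - Suc m" P] by (simp add: n_def Suc_diff_Suc)
  then show "take (Suc (length w)) (rev P) = w @ [P ! (length P - length w - 1)]"
    using P(4) palindrome take_drop_rev[of 0 "Suc m" P] by (simp add: m_def n_def)
  show "drop (length (rev P) - length w) (rev P) = w"
    using P(2,4) palindrome by (simp add: rev_take[symmetric] m_def n_def)
  fix i assume i: "0 < i \<and> i + length w < length (rev P)"
  have "take m (drop (n - m - i) P) \<noteq> w"
    using walk i by (auto simp: return_walk_def m_def n_def)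
  moreover have "take m (drop i (rev P)) = rev (take m (drop (n - m - i) P))"
    using i take_drop_rev[of i m P] by (simp add: m_def n_def)
  ultimately show "take (length w) (drop i (rev P)) \<noteq> w"
    using palindrome by (metis m_def rev_rev_ident)
qed

lemma window_eq_if_follows_return_walk:
  assumes "\<forall>s<d + length w. v s = P ! (s mod (length P - length w))"
  shows "map v [d..<d + length w] = take (length w) (drop (d mod (length P - length w)) P)"
proof -
  define m p where "m = length w" and "p = length P - m"
  have "d mod p < p" using return_walk_length by (simp add: p_def m_def)
  show ?thesis
  proof (rule nth_equalityI)
    fix k assume "k < length (map v [d..<d + length w])"
    then have k: "k < m" by (simp add: m_def)
    then have "v (d + k) = P ! ((d mod p + k) mod p)"
      using assms by (simp add: mod_add_left_eq p_def m_def)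
    also have "\<dots> = P ! (d mod p + k)"
      using return_walk_nth_mod[of "d mod p + k"] \<open>d mod p < p\<close> k by (simp add: p_def m_def)
    finally show "map v [d..<d + length w] ! k
        = take (length w) (drop (d mod (length P - length w)) P) ! k"
      using k \<open>d mod p < p\<close> by (simp add: p_def m_def)
  qed (use \<open>d mod p < p\<close> in \<open>simp add: p_def m_def\<close>)
qed

end

context sturmian_sequence
begin

text \<open>Every vertex of the Rauzy graph other than the left special factor w has a unique
  predecessor, so walks avoiding w are determined backwards by their last vertex.\<close>
lemma rauzy_walk_suffixes_eq:
  assumes w: "left_special u w"
    and X: "rauzy_walk u (length w) X"
      "\<forall>i. 0 < i \<and> i + length w \<le> length X \<longrightarrow> take (length w) (drop i X) \<noteq> w"
    and Y: "rauzy_walk u (length w) Y"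
      "\<forall>i. 0 < i \<and> i + length w \<le> length Y \<longrightarrow> take (length w) (drop i Y) \<noteq> w"
    and last: "drop (length X - length w) X = drop (length Y - length w) Y"
    and len: "length w \<le> length X" "length X \<le> length Y"
  shows "k \<le> length X \<Longrightarrow> drop (length X - k) X = drop (length Y - k) Y"
proof (induction k)
  case (Suc k)
  define m where "m = length w"
  show ?case
  proof (cases "Suc k \<le> m")
    case True
    have "drop (length X - Suc k) X = drop (m - Suc k) (drop (length X - m) X)"
      using True len by (simp add: m_def)
    also have "\<dots> = drop (length Y - Suc k) Y"
      using True len last by (simp add: m_def)
    finally show ?thesis .
  next
    case False
    define i j where "i = length X - Suc k" and "j = length Y - Suc k"
    have IH: "drop (length X - k) X = drop (length Y - k) Y" using Suc by simp
    have "i < length X" "Suc i = length X - k" "j < length Y" "Suc j = length Y - k"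
      using Suc.prems len by (simp_all add: i_def j_def)
    then have dX: "drop i X = X ! i # drop (length X - k) X"
      and dY: "drop j Y = Y ! j # drop (length Y - k) Y"
      by (metis Cons_nth_drop_Suc)+
    define v where "v = take m (drop (length X - k) X)"
    have "v \<noteq> w" "length v = m"
      using X(2)[rule_format, of "length X - k"] False Suc.prems by (auto simp: v_def m_def)
    have "take (Suc m) (drop i X) \<in> lang u" "take (Suc m) (drop j Y) \<in> lang u"
      using X(1)[unfolded rauzy_walk_def, rule_format, of i]
        Y(1)[unfolded rauzy_walk_def, rule_format, of j] False Suc.prems len
      by (simp_all add: i_def j_def m_def)
    then have "X ! i # v \<in> lang u" "Y ! j # v \<in> lang u"
      by (simp_all add: dX dY v_def IH)
    then have "X ! i = Y ! j"
      using left_special_if_Cons_mem_lang left_special_unique[OF _ w] \<open>v \<noteq> w\<close> \<open>length v = m\<close>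
      by (metis m_def)
    then show ?thesis using dX dY IH by (simp add: i_def j_def)
  qed
qed simp

lemma rauzy_walks_eq_if_last_window_eq:
  assumes w: "left_special u w"
    and X: "rauzy_walk u (length w) X" "take (length w) X = w" "length w \<le> length X"
      "\<forall>i. 0 < i \<and> i + length w \<le> length X \<longrightarrow> take (length w) (drop i X) \<noteq> w"
    and Y: "rauzy_walk u (length w) Y" "take (length w) Y = w" "length w \<le> length Y"
      "\<forall>i. 0 < i \<and> i + length w \<le> length Y \<longrightarrow> take (length w) (drop i Y) \<noteq> w"
    and last: "drop (length X - length w) X = drop (length Y - length w) Y"
    and le: "length X \<le> length Y"
  shows "X = Y"
proof -
  have X_eq: "X = drop (length Y - length X) Y"
    using rauzy_walk_suffixes_eq[OF w X(1,4) Y(1,4) last X(3) le, of "length X"] by simp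
  show ?thesis
  proof (cases "length Y - length X = 0")
    case False
    have "take (length w) (drop (length Y - length X) Y) = w" using X(2) X_eq by simp
    then show ?thesis using Y(4) False X(3) le by auto
  qed (use X_eq in simp)
qed

text \<open>The witness is the stretch of u from an occurrence of w c up to the next occurrence
  of w.\<close>
lemma return_walk_exists:
  assumes "w @ [c] \<in> lang u"
  shows "\<exists>P. return_walk u w c P"
proof -
  define m where "m = length w"
  obtain i where i: "w @ [c] = map u [i..<i + Suc m]"
    using assms by (auto simp: lang_def m_def)
  define occ where "occ j \<longleftrightarrow> i < j \<and> map u [j..<j + m] = w" for j
  have "w \<in> lang u" using assms by (rule append_mem_langD1)
  then obtain j0 where "j0 \<ge> Suc i" "\<forall>k<m. w ! k = u (j0 + k)"
    using occurs_beyond m_def by blast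
  then have "occ j0" by (auto simp: occ_def m_def intro!: nth_equalityI)
  define j where "j = (LEAST j. occ j)"
  have j: "occ j" and j_least: "\<And>k. occ k \<Longrightarrow> j \<le> k"
    using LeastI[of occ, OF \<open>occ j0\<close>] Least_le[of occ] by (simp_all add: j_def)
  define P where "P = map u [i..<j + m]"
  have "return_walk u w c P"
    unfolding return_walk_def m_def[symmetric]
  proof (intro conjI allI impI)
    show "rauzy_walk u m P"
      unfolding rauzy_walk_def
    proof (intro allI impI)
      fix k assume "k + Suc m \<le> length P"
      then have "take (Suc m) (drop k P) = map u [i + k..<i + k + Suc m]"
        by (simp add: P_def take_map drop_map del: upt_Suc)
      then show "take (Suc m) (drop k P) \<in> lang u" by (simp only: map_upt_mem_lang)
    qed
    have "take (Suc m) P = map u [i..<i + Suc m]"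
      using j by (simp add: P_def occ_def take_map)
    then show "take (Suc m) P = w @ [c]" using i by simp
    show "drop (length P - m) P = w"
      using j by (simp add: P_def occ_def drop_map)
    fix k assume k: "0 < k \<and> k + m < length P"
    then have "\<not> occ (i + k)" using j_least[of "i + k"] by (auto simp: P_def)
    then show "take m (drop k P) \<noteq> w"
      using k by (auto simp: occ_def P_def take_map drop_map)
  qed
  then show ?thesis by blast
qed

lemma return_walks_prefix_eq:
  assumes w: "left_special u w" and P: "return_walk u w c P" and Q: "return_walk u w c' Q"
    and j1: "j1 < length P - length w" and j2: "j2 < length Q - length w"
    and eq: "take (length w) (drop j1 P) = take (length w) (drop j2 Q)"
  shows "take (j1 + length w) P = take (j2 + length w) Q"
proof -
  note X = return_walk_prefix[OF P j1] and Y = return_walk_prefix[OF Q j2]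
  have last: "drop (length (take (j1 + length w) P) - length w) (take (j1 + length w) P)
      = drop (length (take (j2 + length w) Q) - length w) (take (j2 + length w) Q)"
    using X(5) Y(5) eq by simp
  show ?thesis
  proof (cases "j1 \<le> j2")
    case True
    then show ?thesis
      using rauzy_walks_eq_if_last_window_eq[OF w X(1-4) Y(1-4) last] j1 j2 by simp
  next
    case False
    then show ?thesis
      using rauzy_walks_eq_if_last_window_eq[OF w Y(1-4) X(1-4) last[symmetric]] j1 j2 by simp
  qed
qed

lemma return_walks_window_eq:
  assumes w: "left_special u w" and P: "return_walk u w c P" and Q: "return_walk u w c' Q"
    and j1: "j1 < length P - length w" and j2: "j2 < length Q - length w"
    and eq: "take (length w) (drop j1 P) = take (length w) (drop j2 Q)"
  shows "j1 = j2" and "c \<noteq> c' \<Longrightarrow> j2 = 0"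
proof -
  have prefix: "take (j1 + length w) P = take (j2 + length w) Q"
    using return_walks_prefix_eq[OF w P Q j1 j2 eq] .
  then have "length (take (j1 + length w) P) = length (take (j2 + length w) Q)" by simp
  then show "j1 = j2" using j1 j2 by simp
  assume "c \<noteq> c'"
  show "j2 = 0"
  proof (rule ccontr)
    assume "j2 \<noteq> 0"
    then have "take (j1 + length w) P ! length w = take (j2 + length w) Q ! length w"
      using prefix \<open>j1 = j2\<close> by simp
    then show False
      using return_walk_nth[OF P] return_walk_nth[OF Q] \<open>c \<noteq> c'\<close> \<open>j2 \<noteq> 0\<close> \<open>j1 = j2\<close> by simp
  qed
qed

text \<open>The vertices visited by two return walks leaving w along different edges are pairwise
  distinct apart from w itself.\<close>
lemma return_walks_card_le:
  assumes w: "left_special u w" and P: "return_walk u w c P" and Q: "return_walk u w c' Q"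
    and "c \<noteq> c'"
  shows "(length P - length w) + (length Q - length w) \<le> length w + 2"
proof -
  define m p q where "m = length w" and "p = length P - m" and "q = length Q - m"
  have p: "0 < p" and q: "0 < q"
    using return_walk_length[OF P] return_walk_length[OF Q] by (simp_all add: p_def q_def m_def)
  define V where "V j = (if j < p then take m (drop j P) else take m (drop (j - p + 1) Q))" for j
  have "V j \<in> factors u m" if "j < p + q - 1" for j
  proof (cases "j < p")
    case True
    then have "take m (drop j P) \<in> lang u"
      using P by (intro rauzy_walk_window_mem_lang) (auto simp: return_walk_def p_def m_def)
    then show ?thesis
      using True return_walk_length[OF P] by (simp add: V_def factors_def p_def m_def)
  next
    case False
    then have "take m (drop (j - p + 1) Q) \<in> lang u"
      using Q that by (intro rauzy_walk_window_mem_lang) (auto simp: return_walk_def q_def m_def)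
    then show ?thesis using False that return_walk_length[OF Q]
      by (simp add: V_def factors_def q_def m_def)
  qed
  then have "V ` {..<p + q - 1} \<subseteq> factors u m" by blast
  moreover have "inj_on V {..<p + q - 1}"
  proof (rule inj_onI)
    fix j j' assume j: "j \<in> {..<p + q - 1}" "j' \<in> {..<p + q - 1}" and "V j = V j'"
    have pq: "length P - m = p" "length Q - m = q" by (simp_all add: p_def q_def)
    note PP = return_walks_window_eq[OF w P P, folded m_def, unfolded pq]
      and QQ = return_walks_window_eq[OF w Q Q, folded m_def, unfolded pq]
      and PQ = return_walks_window_eq[OF w P Q, folded m_def, unfolded pq]
    have j_Q: "\<not> j < p \<Longrightarrow> j - p + 1 < q" "\<not> j' < p \<Longrightarrow> j' - p + 1 < q"
      using j by auto
    consider "j < p" "j' < p" | "j < p" "\<not> j' < p" | "\<not> j < p" "j' < p" | "\<not> j < p" "\<not> j' < p"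
      by blast
    then show "j = j'"
    proof cases
      case 1
      then show ?thesis using \<open>V j = V j'\<close> PP(1)[of j j'] by (simp add: V_def)
    next
      case 2
      then show ?thesis using \<open>V j = V j'\<close> PQ(2)[of j "j' - p + 1"] \<open>c \<noteq> c'\<close> j_Q
        by (simp add: V_def)
    next
      case 3
      then show ?thesis using \<open>V j = V j'\<close> PQ(2)[of j' "j - p + 1"] \<open>c \<noteq> c'\<close> j_Q
        by (simp add: V_def)
    next
      case 4
      then show ?thesis using \<open>V j = V j'\<close> QQ(1)[of "j - p + 1" "j' - p + 1"] j_Q
        by (simp add: V_def)
    qed
  qed
  ultimately have "card {..<p + q - 1} \<le> card (factors u m)"
    using card_inj_on_le finite_factors_u by blast
  then show ?thesis using card_factors p q by (simp add: p_def q_def m_def)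
qed

text \<open>The reverse of P is a return walk leaving w along the last letter of P. If that letter
  were not c, the two walks would share their first |w| letters and their period, which forces
  the period to exceed |w|, against the vertex count of the Rauzy graph.\<close>
lemma return_walk_last_letter:
  assumes w: "left_special u w" and palindrome: "rev w = w"
    and rev_closed: "\<forall>z\<in>lang u. length z = Suc (length w) \<longrightarrow> rev z \<in> lang u"
    and P: "return_walk u w c P"
  shows "P ! (length P - length w - 1) = c"
proof (rule ccontr)
  define m p c' where "m = length w" and "p = length P - m" and "c' = P ! (length P - m - 1)"
  assume "P ! (length P - length w - 1) \<noteq> c"
  then have "c' \<noteq> c" by (simp add: c'_def m_def)
  have Q: "return_walk u w c' (rev P)"
    using return_walk_rev[OF P rev_closed palindrome] by (simp add: c'_def m_def)
  have "p > m"
  proof (rule ccontr)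
    assume "\<not> p > m"
    have "0 < p" using return_walk_length[OF P] by (simp add: p_def m_def)
    then have "m mod p < p" by (rule mod_less_divisor)
    with \<open>\<not> p > m\<close> have "m mod p < m" by linarith
    then have "P ! (m mod p) = rev P ! (m mod p)"
      using nth_take[of "m mod p" m P] nth_take[of "m mod p" m "rev P"]
        return_walk_take[OF P] return_walk_take[OF Q] by (simp add: m_def)
    then have "P ! m = rev P ! m"
      using return_walk_nth_mod[OF P, of m] return_walk_nth_mod[OF Q, of m]
        return_walk_length[OF P] by (simp add: p_def m_def)
    then show False
      using return_walk_nth[OF P] return_walk_nth[OF Q] \<open>c' \<noteq> c\<close> by (simp add: m_def)
  qed
  moreover have "p + p \<le> m + 2"
    using return_walks_card_le[OF w P Q \<open>c' \<noteq> c\<close>[symmetric]] by (simp add: p_def m_def)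
  ultimately have "m = 0" "p = 1" by linarith+
  then show False
    using return_walk_nth[OF P] \<open>c' \<noteq> c\<close> by (simp add: c'_def m_def p_def)
qed

section \<open>Closure of the language under reversal\<close>

lemma return_walk_window_next_letter:
  assumes wR: "right_special u w" and P: "return_walk u w c P"
    and r: "0 < r" "r < length P - length w"
    and next_letter: "take (length w) (drop r P) @ [b] \<in> lang u"
  shows "b = P ! (r + length w)"
proof -
  have "take (length w) (drop r P) \<noteq> w" "length (take (length w) (drop r P)) = length w"
    using P r by (simp_all add: return_walk_def)
  moreover have "take (Suc (length w)) (drop r P) \<in> lang u"
    using P r by (simp add: return_walk_def rauzy_walk_def)
  then have "take (length w) (drop r P) @ [P ! (r + length w)] \<in> lang u"
    using r by (simp add: take_Suc_conv_app_nth add.commute)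
  ultimately show ?thesis
    using right_special_if_snoc_mem_lang[OF next_letter] right_special_unique[OF _ wR] by blast
qed

text \<open>If c w is only ever followed by c, the sequence after an occurrence of c w is trapped
  on the return walk leaving w along c: away from w the next letter is forced because w is
  the only right special factor, and at w the previous letter is c.\<close>
lemma follows_return_walk:
  assumes wR: "right_special u w" and P: "return_walk u w c P"
    and last: "P ! (length P - length w - 1) = c"
    and trapped: "\<And>b. c # w @ [b] \<in> lang u \<Longrightarrow> b = c"
    and occ: "map u [i0..<i0 + Suc (length w)] = c # w"
  shows "u (Suc i0 + t) = P ! (t mod (length P - length w))"
proof (induction t rule: less_induct)
  case (less t)
  define m p where "m = length w" and "p = length P - m"
  have p_eq: "length P - length w = p" by (simp add: p_def m_def)
  have p: "0 < p" "length P = m + p" using return_walk_length[OF P] by (simp_all add: p_def m_def)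
  have P_mod: "P ! ((r + m) mod p) = P ! (r + m)" if "r < p" for r
    using return_walk_nth_mod[OF P, of "r + m"] that p by (simp add: p_eq m_def)
  show ?case
  proof (cases "t < m")
    case True
    have "u (Suc i0 + t) = w ! t"
      using arg_cong[OF occ, of "\<lambda>xs. xs ! Suc t"] True by (simp add: m_def del: upt_Suc)
    also have "\<dots> = P ! t"
      using nth_take[of t "length w" P] True return_walk_take[OF P] by (simp add: m_def)
    also have "\<dots> = P ! (t mod p)"
      using return_walk_nth_mod[OF P, of t] True p by (simp add: p_eq m_def)
    finally show ?thesis by (simp add: p_eq)
  next
    case False
    define d r where "d = t - m" and "r = d mod p"
    have r: "r < p" using p by (simp add: r_def)
    have t_mod: "t mod p = (r + m) mod p"
      using False by (simp add: d_def r_def mod_add_left_eq)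
    have "\<forall>s<d + length w. u (Suc i0 + s) = P ! (s mod (length P - length w))"
      using less False by (simp add: d_def m_def)
    then have "map (\<lambda>s. u (Suc i0 + s)) [d..<d + length w]
        = take (length w) (drop (d mod (length P - length w)) P)"
      by (rule window_eq_if_follows_return_walk[OF P])
    then have window: "map u [Suc i0 + d..<Suc i0 + d + m] = take m (drop r P)"
      unfolding map_upt_shift by (simp only: r_def p_eq m_def add.assoc)
    show ?thesis
    proof (cases "r = 0")
      case False
      have "take m (drop r P) @ [u (Suc i0 + t)] \<in> lang u"
        using map_upt_mem_lang[of u "Suc i0 + d" "Suc m"] window \<open>\<not> t < m\<close>
        by (simp add: d_def)
      then have "u (Suc i0 + t) = P ! (r + m)"
        using return_walk_window_next_letter[OF wR P] False r p by (simp add: m_def)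
      then show ?thesis using t_mod P_mod[OF r] by (simp add: p_eq)
    next
      case True
      have "u (i0 + d) = c"
      proof (cases "d = 0")
        case True
        then show ?thesis using arg_cong[OF occ, of hd] by (simp del: upt_Suc add: upt_conv_Cons)
      next
        case False
        have "u (Suc i0 + (d - 1)) = P ! ((d - 1) mod p)"
          using less[of "d - 1"] False by (simp add: d_def p_eq)
        also have "(d - 1) mod p = p - 1"
          using mod_diff_1_eq[of d p] True False p(1) by (simp add: r_def)
        finally show ?thesis using False last p by (simp add: m_def)
      qed
      moreover have "map u [Suc (i0 + d)..<Suc (i0 + d) + length w] = w"
        using window True return_walk_take[OF P] by (simp add: m_def)
      ultimately have "c # w @ [u (Suc i0 + t)] \<in> lang u"
        using Cons_snoc_mem_lang_if_occurs[of u "i0 + d" w] \<open>\<not> t < m\<close> by (simp add: d_def m_def)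
      then have "u (Suc i0 + t) = c" by (rule trapped)
      then show ?thesis
        using t_mod P_mod[OF r] True return_walk_nth[OF P] by (simp add: m_def p_eq)
    qed
  qed
qed

lemma bispecial_palindrome_extension:
  assumes wL: "left_special u w" and wR: "right_special u w" and palindrome: "rev w = w"
    and rev_closed: "\<forall>z\<in>lang u. length z = Suc (length w) \<longrightarrow> rev z \<in> lang u"
    and c: "c = 0 \<or> c = 1"
  shows "c # w @ [1 - c] \<in> lang u"
proof (rule ccontr)
  assume missing: "c # w @ [1 - c] \<notin> lang u"
  obtain P where P: "return_walk u w c P"
    using return_walk_exists wR c by (auto simp: right_special_def)
  have "c # w \<in> lang u" using wL c by (auto simp: left_special_def)
  then obtain i0 where occ: "map u [i0..<i0 + Suc (length w)] = c # w"
    by (auto simp: lang_def)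
  have trapped: "b = c" if "c # w @ [b] \<in> lang u" for b
    using letter_cases[OF that, of b] missing that c by auto
  define p where "p = length P - length w"
  note follows = follows_return_walk[OF wR P return_walk_last_letter[OF wL palindrome rev_closed P]
      trapped occ, folded p_def]
  have "\<forall>i\<ge>Suc i0. u (i + p) = u i"
  proof (intro allI impI)
    fix i assume "Suc i0 \<le> i"
    then have "i = Suc i0 + (i - Suc i0)" "i + p = Suc i0 + (i - Suc i0 + p)" by simp_all
    then show "u (i + p) = u i" using follows by (metis mod_add_self2)
  qed
  moreover have "0 < p" using return_walk_length[OF P] by (simp add: p_def)
  ultimately have "eventually_periodic u" unfolding eventually_periodic_def by blast
  then show False using not_eventually_periodic by contradiction
qed

text \<open>The reversal of a factor a v b is assembled from the reversals of a v and v b unless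
  v is bispecial; then v is a palindrome and a v b is covered by the previous lemma.\<close>
lemma rev_closed_Suc:
  assumes rev_closed: "\<forall>z\<in>lang u. length z = Suc m \<longrightarrow> rev z \<in> lang u"
  shows "\<forall>z\<in>lang u. length z = Suc (Suc m) \<longrightarrow> rev z \<in> lang u"
proof (intro ballI impI)
  fix z assume z: "z \<in> lang u" "length z = Suc (Suc m)"
  from z(2) obtain a y where "z = a # y" by (cases z) auto
  with z(2) obtain v b where z_eq: "z = a # v @ [b]" and "length v = m"
    by (cases y rule: rev_cases) auto
  have "a # v \<in> lang u" "v @ [b] \<in> lang u"
    using z(1) z_eq append_mem_langD1[of "a # v"] append_mem_langD2[of "[a]"] by auto
  then have "rev (a # v) \<in> lang u" "rev (v @ [b]) \<in> lang u"
    using rev_closed[rule_format, of "a # v"] rev_closed[rule_format, of "v @ [b]"]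
      \<open>length v = m\<close> by simp_all
  then have av: "rev v @ [a] \<in> lang u" and vb: "b # rev v \<in> lang u" by simp_all
  show "rev z \<in> lang u"
  proof (cases "right_special u (rev v) \<and> left_special u (rev v)")
    case False
    then show ?thesis
      using Cons_snoc_mem_lang_if_not_bispecial[OF vb av] z_eq by simp
  next
    case True
    have "right_special u (rev (rev v))"
      using True rev_closed \<open>length v = m\<close> by (auto simp: left_special_def right_special_def)
    then have palindrome: "rev v = v"
      using right_special_unique[of "rev (rev v)" "rev v"] True by simp
    have "a = 0 \<or> a = 1" "b = 0 \<or> b = 1"
      using letter_cases[OF z(1)] z_eq by auto
    moreover have "b # v @ [1 - b] \<in> lang u"
      using bispecial_palindrome_extension[of v b] True palindrome rev_closed \<open>length v = m\<close>
        \<open>b = 0 \<or> b = 1\<close> by simp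
    ultimately show ?thesis
      using z(1) z_eq palindrome by (cases "a = b") auto
  qed
qed

lemma rev_mem_lang:
  assumes "z \<in> lang u"
  shows "rev z \<in> lang u"
proof -
  have "\<forall>z\<in>lang u. length z = Suc m \<longrightarrow> rev z \<in> lang u" for m
  proof (induction m)
    case 0
    show ?case by (auto simp: length_Suc_conv)
  next
    case (Suc m)
    then show ?case by (rule rev_closed_Suc)
  qed
  then show ?thesis
    using assms by (cases z) (simp add: Nil_mem_lang, simp del: rev.simps)
qed

lemma right_special_rev_if_left_special: "left_special u v \<Longrightarrow> right_special u (rev v)"
  using rev_mem_lang[of "0 # v"] rev_mem_lang[of "1 # v"]
  by (simp add: left_special_def right_special_def)

end

section \<open>Out-degrees in the HB diagram\<close>

lemma significant_nonempty: "significant u w \<Longrightarrow> w \<noteq> []"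
  by (auto simp: significant_def)

lemma sig_suffix_significant:
  assumes "range u \<subseteq> {0, 1}" and "y \<in> lang u" and "y \<noteq> []"
  shows "suffix (sig u y) y \<and> significant u (sig u y)"
proof -
  define S where "S s \<longleftrightarrow> suffix s y \<and> significant u s" for s
  have "[last y] \<in> lang u"
    using assms(2,3) append_mem_langD2[of "butlast y"] by (metis append_butlast_last_id)
  moreover have "last y \<in> range u"
    using set_subset_range_if_mem_lang[OF assms(2)] last_in_set[OF assms(3)] by blast
  then have "last y \<in> {0, 1}" using assms(1) by blast
  ultimately have "S [last y]"
    using assms(3)
    by (auto simp: S_def significant_def suffix_def intro: append_butlast_last_id[symmetric])
  then obtain s where s: "S s" and longest: "\<And>s'. S s' \<Longrightarrow> length s' \<le> length s"
    using ex_has_greatest_nat[of S _ length "Suc (length y)"]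
    by (metis S_def less_Suc_eq_le suffix_length_le)
  have "sig u y = (THE s. S s \<and> (\<forall>s'. S s' \<longrightarrow> length s' \<le> length s))"
    by (simp add: sig_def S_def)
  also have "\<dots> = s"
  proof (rule the_equality)
    show "S s \<and> (\<forall>s'. S s' \<longrightarrow> length s' \<le> length s)" using s longest by blast
  next
    fix s' assume s': "S s' \<and> (\<forall>s''. S s'' \<longrightarrow> length s'' \<le> length s')"
    then have "length s' = length s" using s longest by (simp add: le_antisym)
    then have "suffix s' s" "suffix s s'"
      using s s' suffix_length_suffix[of _ y] by (simp_all add: S_def)
    then show "s' = s" by (rule suffix_order.antisym)
  qed
  finally have "sig u y = s" .
  then show ?thesis using s by (simp add: S_def)
qed

lemma last_sig:
  assumes "range u \<subseteq> {0, 1}" and "y \<in> lang u" and "y \<noteq> []"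
  shows "last (sig u y) = last y"
  using sig_suffix_significant[OF assms] significant_nonempty
  by (metis last_appendR suffix_def)

lemma card_HB_arrows_eq_2_iff_right_special:
  assumes r: "range u \<subseteq> {0, 1}" and \<alpha>: "significant u \<alpha>"
  shows "card {\<beta>. HB_arrow u \<alpha> \<beta>} = 2 \<longleftrightarrow> right_special u \<alpha>"
proof -
  define E where "E = {b. \<alpha> @ [b] \<in> lang u}"
  have "{\<beta>. HB_arrow u \<alpha> \<beta>} = (\<lambda>b. sig u (\<alpha> @ [b])) ` E"
    using \<alpha> sig_suffix_significant[OF r] by (auto simp: HB_arrow_def E_def)
  moreover have "inj_on (\<lambda>b. sig u (\<alpha> @ [b])) E"
    by (rule inj_onI) (metis E_def last_sig[OF r] mem_Collect_eq last_snoc snoc_eq_iff_butlast)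
  ultimately have "card {\<beta>. HB_arrow u \<alpha> \<beta>} = card E"
    by (simp add: card_image)
  moreover have E01: "E \<subseteq> {0, 1}"
    using r set_subset_range_if_mem_lang by (fastforce simp: E_def)
  then have "card E = 2 \<longleftrightarrow> E = {0, 1}"
    by (metis card_2_iff card_subset_eq finite.emptyI finite.insertI zero_neq_one)
  moreover have "right_special u \<alpha> \<longleftrightarrow> {0, 1} \<subseteq> E"
    by (simp add: right_special_def E_def)
  ultimately show ?thesis using E01 by (simp add: set_eq_subset)
qed

theorem lemma4p10:
  fixes u l :: "nat \<Rightarrow> nat" and x n :: nat
  assumes "sturmian u"
    and "left_special_seq u l"
    and "x \<in> {0, 1}"
    and "n \<ge> 1"
    and "significant u (x # map l [1..<n])"
  shows "(card {\<beta>. HB_arrow u (x # map l [1..<n]) \<beta>} = 2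
            \<longleftrightarrow> right_special u (x # map l [1..<n]))
       \<and> (right_special u (x # map l [1..<n])
            \<longleftrightarrow> x # map l [1..<n] = rev (map l [1..<n+1]))"
proof -
  interpret sturmian_sequence u by unfold_locales (rule assms(1))
  define W L where "W = x # map l [1..<n]" and "L = map l [1..<n+1]"
  have "left_special u L"
    using assms(2) by (simp add: left_special_seq_def left_special_def L_def)
  then have "right_special u (rev L)" by (rule right_special_rev_if_left_special)
  moreover have "length W = length (rev L)"
    using assms(4) by (simp add: W_def L_def)
  ultimately have "right_special u W \<longleftrightarrow> W = rev L"
    using right_special_unique by blast
  moreover have "card {\<beta>. HB_arrow u W \<beta>} = 2 \<longleftrightarrow> right_special u W"
    using card_HB_arrows_eq_2_iff_right_special[OF range_subset] assms(5) by (simp add: W_def)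
  ultimately show ?thesis by (simp add: W_def L_def)
qed

end
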